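(* Let $n,k,t$ be positive integers with $k>t>0$ and $n>2k-t$. Then $$\operatorname{tw}(K(n,k,t))\le \binom{n}{k}-\binom{n-t}{k-t}-1.$$
   Context: For integers $k>t\ge 1$ and $n>2k-t$, the generalized Kneser graph $K(n,k,t)$ is the graph whose vertices are the $k$-element subsets of $[n]=\{1,\dots,n\}$, two vertices $K,K'$ being adjacent if and only if $|K\cap K'|<t$. A tree decomposition of a graph $\Gamma$ is a pair $(T,(B_x)_{x\in V(T)})$ where $T$ is a tree and each $B_x\subseteq V(\Gamma)$, such that every edge of $\Gamma$ is contained in some $B_x$, and for each vertex $v$ of $\Gamma$ the set $\{x\in V(T): v\in B_x\}$ is non-empty and induces a connected subgraph of $T$. Its width is $\max_x |B_x|-1$, and the treewidth $\operatorname{tw}(\Gamma)$ is the minimum width of a tree decomposition of $\Gamma$. *)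

theory Defs
  imports Main
begin

definition walk_in :: "'a set \<Rightarrow> ('a \<Rightarrow> 'a \<Rightarrow> bool) \<Rightarrow> 'a list \<Rightarrow> bool" where
  "walk_in S E p \<longleftrightarrow> p \<noteq> [] \<and> set p \<subseteq> S \<and> (\<forall>i. Suc i < length p \<longrightarrow> E (p ! i) (p ! Suc i))"

definition connected_in :: "'a set \<Rightarrow> ('a \<Rightarrow> 'a \<Rightarrow> bool) \<Rightarrow> bool" where
  "connected_in S E \<longleftrightarrow> S \<noteq> {} \<and>
     (\<forall>x\<in>S. \<forall>y\<in>S. \<exists>p. walk_in S E p \<and> hd p = x \<and> last p = y)"

definition has_cycle :: "'a set \<Rightarrow> ('a \<Rightarrow> 'a \<Rightarrow> bool) \<Rightarrow> bool" where
  "has_cycle V E \<longleftrightarrow> (\<exists>p. walk_in V E p \<and> distinct p \<and> length p \<ge> 3 \<and> E (last p) (hd p))"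

definition is_tree :: "'a set \<Rightarrow> ('a \<Rightarrow> 'a \<Rightarrow> bool) \<Rightarrow> bool" where
  "is_tree V E \<longleftrightarrow> finite V \<and> (\<forall>x y. E x y \<longrightarrow> x \<in> V \<and> y \<in> V) \<and>
     (\<forall>x y. E x y \<longleftrightarrow> E y x) \<and> (\<forall>x. \<not> E x x) \<and>
     connected_in V E \<and> \<not> has_cycle V E"

definition tree_decomposition ::
  "'a set \<Rightarrow> ('a \<Rightarrow> 'a \<Rightarrow> bool) \<Rightarrow> nat set \<Rightarrow> (nat \<Rightarrow> nat \<Rightarrow> bool) \<Rightarrow> (nat \<Rightarrow> 'a set) \<Rightarrow> bool" where
  "tree_decomposition V E TV TE B \<longleftrightarrow>
     is_tree TV TE \<and> (\<forall>x\<in>TV. B x \<subseteq> V) \<and>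
     (\<forall>u\<in>V. \<forall>v\<in>V. E u v \<longrightarrow> (\<exists>x\<in>TV. u \<in> B x \<and> v \<in> B x)) \<and>
     (\<forall>v\<in>V. connected_in {x\<in>TV. v \<in> B x} TE)"

definition td_width :: "nat set \<Rightarrow> (nat \<Rightarrow> 'a set) \<Rightarrow> int" where
  "td_width TV B = int (Max ((\<lambda>x. card (B x)) ` TV)) - 1"

definition treewidth :: "'a set \<Rightarrow> ('a \<Rightarrow> 'a \<Rightarrow> bool) \<Rightarrow> int" where
  "treewidth V E = (LEAST w. \<exists>TV TE B. tree_decomposition V E TV TE B \<and> td_width TV B = w)"

definition kneser_vertices :: "nat \<Rightarrow> nat \<Rightarrow> nat set set" where
  "kneser_vertices n k = {K. K \<subseteq> {1..n} \<and> card K = k}"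

definition kneser_adj :: "nat \<Rightarrow> nat \<Rightarrow> nat \<Rightarrow> nat set \<Rightarrow> nat set \<Rightarrow> bool" where
  "kneser_adj n k t K K' \<longleftrightarrow> K \<in> kneser_vertices n k \<and> K' \<in> kneser_vertices n k \<and> card (K \<inter> K') < t"

end

theory Submission
  imports Defs
begin

text \<open>The $k$-sets containing $\{1,\dots,t\}$ pairwise meet in at least $t$ elements, so they form
  an independent set $A$ of size $\binom{n-t}{k-t}$. A star decomposition with the centre bag
  $V \setminus A$ and, for each $a \in A$, a leaf bag holding $a$ together with its neighbours
  (all of which lie in $V \setminus A$) is a tree decomposition. Every $a \in A$ has a
  non-neighbour outside $A$ (replace the element $1$ of $a$ by an element outside $a$), so each
  leaf bag is no larger than the centre bag, and the width is $|V \setminus A| - 1$.\<close>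

lemma Least_int_le_of_bounded_below:
  fixes P :: "int \<Rightarrow> bool"
  assumes bounded: "\<And>w. P w \<Longrightarrow> b \<le> w" and "P w0"
  shows "(LEAST w. P w) \<le> w0"
proof -
  define Q where "Q = (\<lambda>m::nat. P (b + int m))"
  have "Q (nat (w0 - b))" using \<open>P w0\<close> bounded[OF \<open>P w0\<close>] by (simp add: Q_def)
  define m0 where "m0 = (LEAST m. Q m)"
  have "Q m0" unfolding m0_def by (rule LeastI) fact
  have "(LEAST w. P w) = b + int m0"
  proof (rule Least_equality)
    show "P (b + int m0)" using \<open>Q m0\<close> by (simp add: Q_def)
  next
    fix y assume "P y"
    with bounded have "Q (nat (y - b))" by (simp add: Q_def)
    then have "m0 \<le> nat (y - b)" unfolding m0_def by (rule Least_le)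
    then show "b + int m0 \<le> y" using bounded[OF \<open>P y\<close>] by linarith
  qed
  moreover have "m0 \<le> nat (w0 - b)" unfolding m0_def by (rule Least_le) fact
  ultimately show ?thesis using bounded[OF \<open>P w0\<close>] by linarith
qed

lemma treewidth_le_td_width:
  assumes "tree_decomposition V E TV TE B"
  shows "treewidth V E \<le> td_width TV B"
  unfolding treewidth_def
  by (rule Least_int_le_of_bounded_below[where b = "-1"]) (use assms in \<open>auto simp: td_width_def\<close>)

definition star_edge :: "nat \<Rightarrow> nat \<Rightarrow> nat \<Rightarrow> bool" where
  "star_edge m x y \<longleftrightarrow> (x = 0 \<and> y \<in> {1..m}) \<or> (y = 0 \<and> x \<in> {1..m})"

lemma connected_in_singleton: "connected_in {x} E"
  unfolding connected_in_def by (auto intro!: exI[of _ "[x]"] simp: walk_in_def)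

lemma connected_in_star_edge:
  assumes "S \<subseteq> {0..m}" "0 \<in> S"
  shows "connected_in S (star_edge m)"
  unfolding connected_in_def
proof (intro conjI ballI)
  show "S \<noteq> {}" using assms by auto
next
  fix x y assume "x \<in> S" "y \<in> S"
  consider "x = y" | "x \<noteq> y" "x = 0 \<or> y = 0" | "x \<noteq> 0" "y \<noteq> 0"
    by blast
  then show "\<exists>p. walk_in S (star_edge m) p \<and> hd p = x \<and> last p = y"
  proof cases
    case 1
    then show ?thesis using \<open>x \<in> S\<close> by (intro exI[of _ "[x]"]) (auto simp: walk_in_def)
  next
    case 2
    then show ?thesis using \<open>x \<in> S\<close> \<open>y \<in> S\<close> assms
      by (intro exI[of _ "[x, y]"]) (auto simp: walk_in_def star_edge_def less_Suc_eq)
  next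
    case 3
    then show ?thesis using \<open>x \<in> S\<close> \<open>y \<in> S\<close> assms
      by (intro exI[of _ "[x, 0, y]"])
        (auto simp: walk_in_def star_edge_def less_Suc_eq nth_Cons split: nat.splits)
  qed
qed

lemma is_tree_star_edge: "is_tree {0..m} (star_edge m)"
  unfolding is_tree_def
proof (intro conjI allI)
  show "connected_in {0..m} (star_edge m)" by (rule connected_in_star_edge) auto
  show "\<not> has_cycle {0..m} (star_edge m)"
  proof
    assume "has_cycle {0..m} (star_edge m)"
    then obtain p where walk: "walk_in {0..m} (star_edge m) p" and "distinct p" "length p \<ge> 3"
      and closing: "star_edge m (last p) (hd p)" unfolding has_cycle_def by blast
    have edge: "star_edge m (p ! i) (p ! Suc i)" if "Suc i < length p" for i
      using walk that by (auto simp: walk_in_def)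
    have distinct_nth: "p ! i \<noteq> p ! j" if "i < length p" "j < length p" "i \<noteq> j" for i j
      using \<open>distinct p\<close> that by (simp add: nth_eq_iff_index_eq)
    have "p ! 0 \<noteq> p ! 2" "p ! 1 \<noteq> p ! 2" "p ! 0 \<noteq> p ! 1"
      by (rule distinct_nth; use \<open>length p \<ge> 3\<close> in linarith)+
    \<comment> \<open>Every edge has the centre \<open>0\<close> as an endpoint, so consecutive vertices alternate with \<open>0\<close>,
      and \<open>0\<close> would occur twice.\<close>
    have "p ! 1 = 0"
      using edge[of 0] edge[of 1] \<open>p ! 0 \<noteq> p ! 2\<close> \<open>length p \<ge> 3\<close>
      by (auto simp: star_edge_def numeral_2_eq_2)
    show False
    proof (cases "length p = 3")
      case True
      then have "p \<noteq> []" by auto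
      with True have "last p = p ! 2" "hd p = p ! 0"
        by (simp_all add: last_conv_nth hd_conv_nth)
      then show False using closing \<open>p ! 1 = 0\<close> \<open>p ! 0 \<noteq> p ! 1\<close> \<open>p ! 1 \<noteq> p ! 2\<close>
        by (auto simp: star_edge_def)
    next
      case False
      then show False
        using edge[of 2] \<open>p ! 1 = 0\<close> \<open>p ! 1 \<noteq> p ! 2\<close> distinct_nth[of 1 3] \<open>length p \<ge> 3\<close>
        by (auto simp: star_edge_def numeral_3_eq_3)
    qed
  qed
qed (auto simp: star_edge_def)

lemma tree_decomposition_star_independent:
  assumes sym: "\<And>u v. E u v \<Longrightarrow> E v u"
    and "A \<subseteq> V"
    and independent: "\<And>a b. a \<in> A \<Longrightarrow> b \<in> A \<Longrightarrow> \<not> E a b"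
    and f: "bij_betw f {1..m} A"
  shows "tree_decomposition V E {0..m} (star_edge m)
           (\<lambda>x. if x = 0 then V - A else insert (f x) {v \<in> V. E (f x) v})"
    (is "tree_decomposition V E {0..m} (star_edge m) ?B")
  unfolding tree_decomposition_def
proof (intro conjI ballI impI)
  have f_in: "f x \<in> A" if "x \<in> {1..m}" for x
    using f that by (auto simp: bij_betw_def)
  have f_preimage: "\<exists>x\<in>{1..m}. f x = a" if "a \<in> A" for a
    using f that by (auto simp: bij_betw_def)
  show "is_tree {0..m} (star_edge m)" by (rule is_tree_star_edge)
  show "?B x \<subseteq> V" if "x \<in> {0..m}" for x
    using f_in[of x] that \<open>A \<subseteq> V\<close> by auto
  show "\<exists>x\<in>{0..m}. u \<in> ?B x \<and> v \<in> ?B x" if "u \<in> V" "v \<in> V" "E u v" for u v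
  proof -
    consider "u \<in> A" | "v \<in> A" | "u \<notin> A" "v \<notin> A" by blast
    then show ?thesis
    proof cases
      case 1
      with f_preimage obtain x where "x \<in> {1..m}" "f x = u" by blast
      then show ?thesis using that by (intro bexI[of _ x]) auto
    next
      case 2
      with f_preimage obtain x where "x \<in> {1..m}" "f x = v" by blast
      then show ?thesis using that sym by (intro bexI[of _ x]) auto
    next
      case 3
      then show ?thesis using that by (intro bexI[of _ 0]) auto
    qed
  qed
  show "connected_in {x \<in> {0..m}. v \<in> ?B x} (star_edge m)" if "v \<in> V" for v
  proof (cases "v \<in> A")
    case True
    with f_preimage obtain i where i: "i \<in> {1..m}" "f i = v" by blast
    have "{x \<in> {0..m}. v \<in> ?B x} = {i}"
    proof safe
      fix x assume x: "x \<in> {0..m}" "v \<in> ?B x"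
      then have "x \<in> {1..m}" using True by (auto split: if_splits)
      with x have "f x = v" using True independent[OF f_in] by auto
      then show "x = i"
        using i \<open>x \<in> {1..m}\<close> inj_onD[OF bij_betw_imp_inj_on[OF f]] by metis
    qed (use i in auto)
    then show ?thesis by (simp add: connected_in_singleton)
  next
    case False
    then show ?thesis using \<open>v \<in> V\<close> by (intro connected_in_star_edge) auto
  qed
qed

lemma treewidth_le_card_diff_independent:
  assumes "finite V"
    and sym: "\<And>u v. E u v \<Longrightarrow> E v u"
    and "A \<subseteq> V"
    and independent: "\<And>a b. a \<in> A \<Longrightarrow> b \<in> A \<Longrightarrow> \<not> E a b"
    and non_neighbour: "\<And>a. a \<in> A \<Longrightarrow> \<exists>c \<in> V - A. \<not> E a c"
  shows "treewidth V E \<le> int (card V) - int (card A) - 1"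
proof -
  define m where "m = card A"
  have "finite A" using \<open>A \<subseteq> V\<close> \<open>finite V\<close> by (rule finite_subset)
  then obtain f where f: "bij_betw f {1..m} A"
    unfolding m_def using ex_bij_betw_nat_finite_1 by blast
  define B where "B = (\<lambda>x. if x = 0 then V - A else insert (f x) {v \<in> V. E (f x) v})"
  have td: "tree_decomposition V E {0..m} (star_edge m) B"
    unfolding B_def using tree_decomposition_star_independent[OF sym \<open>A \<subseteq> V\<close> independent f] .
  have "card (B x) \<le> card (V - A)" if "x \<in> {0..m}" for x
  proof (cases "x = 0")
    case False
    then have "f x \<in> A" using f that by (auto simp: bij_betw_def)
    with non_neighbour obtain c where "c \<in> V - A" "\<not> E (f x) c" by blast
    have "{v \<in> V. E (f x) v} \<subseteq> V - A - {c}"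
      using \<open>f x \<in> A\<close> independent \<open>\<not> E (f x) c\<close> by auto
    then have "card {v \<in> V. E (f x) v} \<le> card (V - A) - 1"
      using \<open>finite V\<close> \<open>c \<in> V - A\<close> by (metis card_Diff_singleton card_mono finite_Diff)
    moreover have "card (V - A) > 0" using \<open>finite V\<close> \<open>c \<in> V - A\<close> by (auto simp: card_gt_0_iff)
    ultimately show ?thesis using False by (simp add: B_def card_insert_le_m1)
  qed (simp add: B_def)
  then have "Max ((\<lambda>x. card (B x)) ` {0..m}) \<le> card (V - A)"
    by (subst Max_le_iff) auto
  then have "td_width {0..m} B \<le> int (card (V - A)) - 1"
    unfolding td_width_def by linarith
  also have "\<dots> = int (card V) - int (card A) - 1"
    using \<open>finite A\<close> \<open>A \<subseteq> V\<close> card_mono[OF \<open>finite V\<close> \<open>A \<subseteq> V\<close>] by (simp add: card_Diff_subset)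
  finally show ?thesis using treewidth_le_td_width[OF td] by linarith
qed

lemma kneser_adj_sym: "kneser_adj n k t K K' \<Longrightarrow> kneser_adj n k t K' K"
  by (auto simp: kneser_adj_def Int_commute)

lemma card_kneser_vertices: "card (kneser_vertices n k) = n choose k"
  by (simp add: kneser_vertices_def n_subsets)

lemma card_kneser_vertices_supset_prefix:
  assumes "t \<le> k" "t \<le> n"
  shows "card {K \<in> kneser_vertices n k. {1..t} \<subseteq> K} = (n - t) choose (k - t)"
proof -
  let ?A = "{K \<in> kneser_vertices n k. {1..t} \<subseteq> K}"
  let ?L = "{L. L \<subseteq> {t+1..n} \<and> card L = k - t}"
  have "bij_betw (\<lambda>L. L \<union> {1..t}) ?L ?A"
  proof (rule bij_betw_byWitness[where f' = "\<lambda>K. K - {1..t}"])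
    show "(\<lambda>L. L \<union> {1..t}) ` ?L \<subseteq> ?A"
    proof (rule image_subsetI)
      fix L assume "L \<in> ?L"
      then have L: "L \<subseteq> {t+1..n}" "card L = k - t" by auto
      then have "finite L" "L \<inter> {1..t} = {}" using finite_subset by auto
      then show "L \<union> {1..t} \<in> ?A"
        using L assms by (auto simp: kneser_vertices_def card_Un_disjoint)
    qed
    show "(\<lambda>K. K - {1..t}) ` ?A \<subseteq> ?L"
    proof (rule image_subsetI)
      fix K assume "K \<in> ?A"
      then have "K \<in> kneser_vertices n k" "{1..t} \<subseteq> K" by auto
      moreover then have "finite K" by (auto simp: kneser_vertices_def intro: finite_subset)
      ultimately show "K - {1..t} \<in> ?L" by (auto simp: kneser_vertices_def card_Diff_subset)
    qed
  qed auto
  then have "card ?A = card ?L" by (simp add: bij_betw_same_card)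
  then show ?thesis by (simp add: n_subsets)
qed

lemma not_kneser_adj_if_supset_prefix:
  assumes "{1..t} \<subseteq> K" "{1..t} \<subseteq> K'" "K \<in> kneser_vertices n k"
  shows "\<not> kneser_adj n k t K K'"
proof -
  have "finite K" using assms(3) by (auto simp: kneser_vertices_def intro: finite_subset)
  then have "card {1..t} \<le> card (K \<inter> K')" using assms(1,2) by (intro card_mono) auto
  then show ?thesis by (simp add: kneser_adj_def)
qed

lemma kneser_non_neighbour_avoiding:
  assumes "K \<in> kneser_vertices n k" "x \<in> K" "k < n" "t < k"
  shows "\<exists>K' \<in> kneser_vertices n k. x \<notin> K' \<and> \<not> kneser_adj n k t K K'"
proof -
  have K: "K \<subseteq> {1..n}" "card K = k" "finite K"
    using assms(1) by (auto simp: kneser_vertices_def intro: finite_subset)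
  then have "\<not> {1..n} \<subseteq> K" using \<open>k < n\<close> by (metis card_mono finite_atLeastAtMost card_atLeastAtMost
        diff_Suc_1 leD)
  then obtain y where y: "y \<in> {1..n}" "y \<notin> K" by blast
  \<comment> \<open>Swapping one element keeps $k - 1 \ge t$ common elements.\<close>
  define K' where "K' = insert y (K - {x})"
  have "K' \<in> kneser_vertices n k"
    using K y \<open>x \<in> K\<close> \<open>t < k\<close> by (auto simp: K'_def kneser_vertices_def card_Diff_singleton)
  moreover have "K \<inter> K' = K - {x}" using y by (auto simp: K'_def)
  then have "card (K \<inter> K') = k - 1" using K \<open>x \<in> K\<close> by (simp add: card_Diff_singleton)
  ultimately show ?thesis using y \<open>x \<in> K\<close> \<open>t < k\<close> by (intro bexI[of _ K']) (auto simp: K'_def kneser_adj_def)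
qed

theorem mainTheorem1:
  fixes n k t :: nat
  assumes "0 < t" and "t < k" and "n > 2 * k - t"
  shows "treewidth (kneser_vertices n k) (kneser_adj n k t)
           \<le> int (n choose k) - int ((n - t) choose (k - t)) - 1"
proof -
  define A where "A = {K \<in> kneser_vertices n k. {1..t} \<subseteq> K}"
  have "k < n" using assms by linarith
  have "treewidth (kneser_vertices n k) (kneser_adj n k t)
          \<le> int (card (kneser_vertices n k)) - int (card A) - 1"
  proof (rule treewidth_le_card_diff_independent)
    show "finite (kneser_vertices n k)" by (simp add: kneser_vertices_def)
    show "A \<subseteq> kneser_vertices n k" by (auto simp: A_def)
    show "\<not> kneser_adj n k t a b" if "a \<in> A" "b \<in> A" for a b
      using that not_kneser_adj_if_supset_prefix[of t a b n k] by (auto simp: A_def)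
    show "\<exists>c \<in> kneser_vertices n k - A. \<not> kneser_adj n k t a c" if "a \<in> A" for a
    proof -
      have "a \<in> kneser_vertices n k" "1 \<in> a" using that \<open>0 < t\<close> by (auto simp: A_def)
      then obtain c where "c \<in> kneser_vertices n k" "1 \<notin> c" "\<not> kneser_adj n k t a c"
        using kneser_non_neighbour_avoiding \<open>k < n\<close> \<open>t < k\<close> by blast
      moreover have "c \<notin> A"
        using \<open>1 \<notin> c\<close> \<open>0 < t\<close> by (force simp: A_def)
      ultimately show ?thesis by blast
    qed
  qed (rule kneser_adj_sym)
  moreover have "card A = (n - t) choose (k - t)"
    unfolding A_def using assms \<open>k < n\<close> by (intro card_kneser_vertices_supset_prefix) auto
  ultimately show ?thesis by (simp add: card_kneser_vertices)
qed

end
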